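(* Consider two linear classifiers $h_1(x)=\mathbf 1(w_1^\top x\ge0)$ and $h_2(x)=\mathbf 1(w_2^\top x\ge0)$ on $\mathbb R^2$ with $\|w_i\|_2=1$, and let $0<\theta<\pi$ satisfy $\cos\theta=-w_1^\top w_2$. If $\pi/2\le\theta<\pi$, then for every agent $x^{(0)}\in\mathbb R^2$ there exists an optimal sequential strategy $(x^{(1)},x^{(2)})$ with $x^{(1)}=x^{(2)}$; i.e. $c^*_{\mathrm{seq}}(x^{(0)},\{h_1,h_2\})=c^*_{\mathrm{conj}}(x^{(0)},\{h_1,h_2\})$.
   Context: With Euclidean cost, $c^*_{\mathrm{seq}}(x^{(0)},\{h_1,h_2\})=\min\{\|x^{(1)}-x^{(0)}\|_2+\|x^{(2)}-x^{(1)}\|_2:h_1(x^{(1)})=1,h_2(x^{(2)})=1\}$, an optimal sequential strategy is a minimizing pair, and $c^*_{\mathrm{conj}}(x^{(0)},\{h_1,h_2\})=\min\{\|z-x^{(0)}\|_2:h_1(z)=h_2(z)=1\}$. *)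

theory Defs
  imports "HOL-Analysis.Analysis"
begin

definition lin_clf :: "real^2 \<Rightarrow> real^2 \<Rightarrow> real" where
  "lin_clf w x = (if w \<bullet> x \<ge> 0 then 1 else 0)"

definition seq_feasible :: "(real^2 \<Rightarrow> real) \<Rightarrow> (real^2 \<Rightarrow> real) \<Rightarrow> real^2 \<Rightarrow> real^2 \<Rightarrow> bool" where
  "seq_feasible h1 h2 x1 x2 \<longleftrightarrow> h1 x1 = 1 \<and> h2 x2 = 1"

definition opt_seq_strategy ::
  "real^2 \<Rightarrow> (real^2 \<Rightarrow> real) \<Rightarrow> (real^2 \<Rightarrow> real) \<Rightarrow> real^2 \<Rightarrow> real^2 \<Rightarrow> bool" where
  "opt_seq_strategy x0 h1 h2 x1 x2 \<longleftrightarrow>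
     seq_feasible h1 h2 x1 x2 \<and>
     (\<forall>y1 y2. seq_feasible h1 h2 y1 y2 \<longrightarrow>
        norm (x1 - x0) + norm (x2 - x1) \<le> norm (y1 - x0) + norm (y2 - y1))"

definition c_seq :: "real^2 \<Rightarrow> (real^2 \<Rightarrow> real) \<Rightarrow> (real^2 \<Rightarrow> real) \<Rightarrow> real" where
  "c_seq x0 h1 h2 = Inf {norm (x1 - x0) + norm (x2 - x1) | x1 x2. h1 x1 = 1 \<and> h2 x2 = 1}"

definition c_conj :: "real^2 \<Rightarrow> (real^2 \<Rightarrow> real) \<Rightarrow> (real^2 \<Rightarrow> real) \<Rightarrow> real" where
  "c_conj x0 h1 h2 = Inf {norm (z - x0) | z. h1 z = 1 \<and> h2 z = 1}"

end

theory Submission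
  imports Defs
begin

text \<open>For \<open>\<theta> \<ge> \<pi>/2\<close> the normals satisfy \<open>w\<^sub>1 \<bullet> w\<^sub>2 \<ge> 0\<close>. Then any point accepted by \<open>h\<^sub>1\<close> but
  rejected by \<open>h\<^sub>2\<close> has its orthogonal projection onto the boundary line of \<open>h\<^sub>2\<close> inside the
  cone \<open>K\<close> accepted by both, and this projection is no farther away than any point accepted by
  \<open>h\<^sub>2\<close>. Hence every feasible path \<open>x\<^sub>0 \<rightarrow> x\<^sub>1 \<rightarrow> x\<^sub>2\<close> is at least as long as the segment
  from \<open>x\<^sub>0\<close> to some point of \<open>K\<close>, so the nearest point of the closed cone \<open>K\<close> to \<open>x\<^sub>0\<close>,
  taken twice, is an optimal sequential strategy.\<close>

lemma lin_clf_eq_1_iff: "lin_clf w x = 1 \<longleftrightarrow> w \<bullet> x \<ge> 0"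
  by (simp add: lin_clf_def)

lemma inner_nonneg_of_obtuse_angle:
  assumes "pi / 2 \<le> \<theta>" "\<theta> < pi" "cos \<theta> = - (w1 \<bullet> w2)"
  shows "w1 \<bullet> w2 \<ge> 0"
proof -
  have "0 \<le> cos (pi - \<theta>)" using assms by (intro cos_ge_zero) auto
  then show ?thesis using assms by simp
qed

lemma halfspace_projection_dist_le:
  fixes w y z :: "'a::real_inner"
  assumes "w \<bullet> z \<ge> 0" "w \<bullet> y < 0"
  shows "dist y (y - ((w \<bullet> y) / (w \<bullet> w)) *\<^sub>R w) \<le> dist y z"
proof -
  from assms(2) have "w \<noteq> 0" by auto
  then have "norm w > 0" by simp
  have "dist y (y - ((w \<bullet> y) / (w \<bullet> w)) *\<^sub>R w) = - (w \<bullet> y) / norm w"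
    using assms(2) \<open>norm w > 0\<close>
    by (simp add: dist_norm abs_divide power2_norm_eq_inner[symmetric] power2_eq_square)
  also have "\<dots> \<le> w \<bullet> (z - y) / norm w"
    using assms \<open>norm w > 0\<close> by (intro divide_right_mono) (auto simp: inner_diff_right)
  also have "\<dots> \<le> norm (z - y)"
    using norm_cauchy_schwarz[of w "z - y"] \<open>norm w > 0\<close> by (simp add: field_simps)
  finally show ?thesis by (simp add: dist_norm norm_minus_commute)
qed

lemma halfspace_inter_shortcut:
  fixes w1 w2 y1 y2 :: "'a::real_inner"
  assumes "w1 \<bullet> w2 \<ge> 0" "w1 \<bullet> y1 \<ge> 0" "w2 \<bullet> y2 \<ge> 0"
  obtains p where "w1 \<bullet> p \<ge> 0" "w2 \<bullet> p \<ge> 0" "dist y1 p \<le> dist y1 y2"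
proof (cases "w2 \<bullet> y1 \<ge> 0")
  case True
  then show ?thesis using that[of y1] assms by simp
next
  case False
  define p where "p = y1 - ((w2 \<bullet> y1) / (w2 \<bullet> w2)) *\<^sub>R w2"
  from False have "w2 \<bullet> w2 \<noteq> 0" by auto
  then have "w2 \<bullet> p = 0" by (simp add: p_def inner_diff_right)
  moreover have "w1 \<bullet> p \<ge> 0"
  proof -
    have "(w2 \<bullet> y1) / (w2 \<bullet> w2) * (w1 \<bullet> w2) \<le> 0"
      using False assms(1) by (intro mult_nonpos_nonneg divide_nonpos_nonneg) auto
    then show ?thesis using assms(2) by (simp add: p_def inner_diff_right)
  qed
  moreover have "dist y1 p \<le> dist y1 y2"
    using halfspace_projection_dist_le[OF assms(3)] False by (simp add: p_def)
  ultimately show ?thesis using that by simp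
qed

lemma c_seq_eq_of_opt_seq_strategy:
  assumes "opt_seq_strategy x0 h1 h2 x1 x2"
  shows "c_seq x0 h1 h2 = norm (x1 - x0) + norm (x2 - x1)"
  unfolding c_seq_def
  by (rule cInf_eq_minimum) (use assms in \<open>auto simp: opt_seq_strategy_def seq_feasible_def\<close>)

lemma c_conj_eq_of_minimizer:
  assumes "h1 z = 1" "h2 z = 1"
    and "\<And>y. h1 y = 1 \<Longrightarrow> h2 y = 1 \<Longrightarrow> norm (z - x0) \<le> norm (y - x0)"
  shows "c_conj x0 h1 h2 = norm (z - x0)"
  unfolding c_conj_def by (rule cInf_eq_minimum) (use assms in auto)

lemma opt_seq_strategy_nearest_in_cone:
  fixes w1 w2 x0 z :: "real^2"
  assumes "w1 \<bullet> w2 \<ge> 0" "w1 \<bullet> z \<ge> 0" "w2 \<bullet> z \<ge> 0"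
    and nearest: "\<And>y. w1 \<bullet> y \<ge> 0 \<Longrightarrow> w2 \<bullet> y \<ge> 0 \<Longrightarrow> dist x0 z \<le> dist x0 y"
  shows "opt_seq_strategy x0 (lin_clf w1) (lin_clf w2) z z"
proof -
  have "dist x0 z \<le> dist x0 y1 + dist y1 y2" if y: "w1 \<bullet> y1 \<ge> 0" "w2 \<bullet> y2 \<ge> 0" for y1 y2
  proof -
    obtain p where p: "w1 \<bullet> p \<ge> 0" "w2 \<bullet> p \<ge> 0" "dist y1 p \<le> dist y1 y2"
      using halfspace_inter_shortcut[OF assms(1) y] .
    have "dist x0 z \<le> dist x0 p" using nearest p by blast
    also have "\<dots> \<le> dist x0 y1 + dist y1 p" by (rule dist_triangle)
    finally show ?thesis using p(3) by linarith
  qed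
  then show ?thesis
    using assms(2,3)
    by (simp add: opt_seq_strategy_def seq_feasible_def lin_clf_eq_1_iff dist_norm norm_minus_commute)
qed

theorem mainTheorem14:
  fixes w1 w2 :: "real^2" and \<theta> :: real
  assumes "norm w1 = 1" and "norm w2 = 1"
    and "0 < \<theta>" and "\<theta> < pi" and "cos \<theta> = - (w1 \<bullet> w2)"
    and "pi / 2 \<le> \<theta>"
  shows "\<forall>x0 :: real^2.
           (\<exists>x1 x2. opt_seq_strategy x0 (lin_clf w1) (lin_clf w2) x1 x2 \<and> x1 = x2) \<and>
           c_seq x0 (lin_clf w1) (lin_clf w2) = c_conj x0 (lin_clf w1) (lin_clf w2)"
proof
  fix x0 :: "real^2"
  have w12: "w1 \<bullet> w2 \<ge> 0" using inner_nonneg_of_obtuse_angle assms by blast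
  define K where "K = {x. w1 \<bullet> x \<ge> 0} \<inter> {x::real^2. w2 \<bullet> x \<ge> 0}"
  have "closed K" "0 \<in> K" unfolding K_def by (auto intro: closed_Int closed_halfspace_ge)
  then obtain z where "z \<in> K" and nearest: "\<And>y. y \<in> K \<Longrightarrow> dist x0 z \<le> dist x0 y"
    using distance_attains_inf by blast
  then have z: "w1 \<bullet> z \<ge> 0" "w2 \<bullet> z \<ge> 0" by (auto simp: K_def)
  have opt: "opt_seq_strategy x0 (lin_clf w1) (lin_clf w2) z z"
    using opt_seq_strategy_nearest_in_cone[OF w12 z] nearest by (simp add: K_def)
  have "c_conj x0 (lin_clf w1) (lin_clf w2) = norm (z - x0)"
    using z nearest
    by (intro c_conj_eq_of_minimizer) (auto simp: lin_clf_eq_1_iff K_def dist_norm norm_minus_commute)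
  moreover have "c_seq x0 (lin_clf w1) (lin_clf w2) = norm (z - x0)"
    using c_seq_eq_of_opt_seq_strategy[OF opt] by simp
  ultimately show "(\<exists>x1 x2. opt_seq_strategy x0 (lin_clf w1) (lin_clf w2) x1 x2 \<and> x1 = x2) \<and>
      c_seq x0 (lin_clf w1) (lin_clf w2) = c_conj x0 (lin_clf w1) (lin_clf w2)"
    using opt by auto
qed

end
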